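(* Let $H$ be an $r$-graph. Then $\Delta(i(P_{K_r^r,H}))\cong\mathrm{sd}\,\mathsf{B}_{\mathrm{edge}}(H)$ if and only if $H$ does not contain the complete $r$-partite sub-$r$-graph $K^r_{1,\dots,1,2,2}$, i.e. if and only if there do not exist pairwise disjoint sets $A_1,\dots,A_r\subseteq V(H)$ with $|A_1|=\dots=|A_{r-2}|=1$, $|A_{r-1}|=|A_r|=2$ such that $x_1\cdots x_r\in E(H)$ for every choice $x_j\in A_j$.
   Context: An $r$-graph $H$ consists of a vertex set $V(H)$ and a set $E(H)$ of $r$-element subsets of $V(H)$; an edge $\{v_1,\dots,v_r\}$ is written $v_1\cdots v_r$. $K_r^r$ is the $r$-graph on $\{1,\dots,r\}$ with the single edge $\{1,\dots,r\}$. $P_{K_r^r,H}$ is the poset of maps $f:\{1,\dots,r\}\to 2^{V(H)}\setminus\{\varnothing\}$ such that for every choice $x_j\in f(j)$ the $x_j$ are distinct and $x_1\cdots x_r\in E(H)$, ordered by $f\le g$ iff $f(j)\subseteq g(j)$ for all $j$. $\mathsf{B}_{\mathrm{edge}}(H)$ is the simplicial complex whose vertices are tuples $(v_1,\dots,v_r)\in V(H)^r$ with $v_1\cdots v_r\in E(H)$ and whose simplices are the sets $F$ of such tuples with $\mathrm{pr}_1(F),\dots,\mathrm{pr}_r(F)$ pairwise disjoint and $x_1\cdots x_r\in E(H)$ for every choice $x_j\in\mathrm{pr}_j(F)$. $\mathcal F(\mathsf{B}_{\mathrm{edge}}(H))$ denotes its poset of nonempty simplices ordered by inclusion, and $\mathrm{sd}\,\mathsf{B}_{\mathrm{edge}}(H)=\Delta(\mathcal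 F(\mathsf{B}_{\mathrm{edge}}(H)))$, where $\Delta(P)$ is the order complex (simplices = chains) of a poset $P$. The map $i:P_{K_r^r,H}\to\mathcal F(\mathsf{B}_{\mathrm{edge}}(H))$ is $i(\varphi)=\varphi(1)\times\cdots\times\varphi(r)$, and $i(P_{K_r^r,H})$ is its image, a subposet of $\mathcal F(\mathsf{B}_{\mathrm{edge}}(H))$. *)

theory Defs
  imports "HOL-Library.FuncSet"
begin

text \<open>An r-graph: finite vertex set V and edge set E of r-element subsets of V.
  Indices run over {1..r}; tuples and maps on {1..r} are extensional functions (PiE).\<close>

definition r_graph :: "nat \<Rightarrow> 'v set \<Rightarrow> 'v set set \<Rightarrow> bool" where
  "r_graph r V E \<longleftrightarrow> finite V \<and> (\<forall>e\<in>E. e \<subseteq> V \<and> card e = r)"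

text \<open>The poset P_{K_r^r,H} (as a set; ordered componentwise by inclusion).\<close>
definition P_K_H :: "nat \<Rightarrow> 'v set \<Rightarrow> 'v set set \<Rightarrow> (nat \<Rightarrow> 'v set) set" where
  "P_K_H r V E = {f. f \<in> (\<Pi>\<^sub>E j\<in>{1..r}. Pow V - {{}}) \<and>
      (\<forall>x\<in>(\<Pi>\<^sub>E j\<in>{1..r}. f j). inj_on x {1..r} \<and> x ` {1..r} \<in> E)}"

definition proj :: "nat \<Rightarrow> (nat \<Rightarrow> 'v) set \<Rightarrow> 'v set" where
  "proj j F = (\<lambda>t. t j) ` F"

definition B_edge_vertices :: "nat \<Rightarrow> 'v set \<Rightarrow> 'v set set \<Rightarrow> (nat \<Rightarrow> 'v) set" where
  "B_edge_vertices r V E = {t. t \<in> (\<Pi>\<^sub>E j\<in>{1..r}. V) \<and> t ` {1..r} \<in> E}"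

text \<open>Nonempty simplices of B_edge(H); this set is the face poset F(B_edge(H)).\<close>
definition B_edge :: "nat \<Rightarrow> 'v set \<Rightarrow> 'v set set \<Rightarrow> (nat \<Rightarrow> 'v) set set" where
  "B_edge r V E = {F. F \<noteq> {} \<and> finite F \<and> F \<subseteq> B_edge_vertices r V E \<and>
      (\<forall>j\<in>{1..r}. \<forall>k\<in>{1..r}. j \<noteq> k \<longrightarrow> proj j F \<inter> proj k F = {}) \<and>
      (\<forall>x\<in>(\<Pi>\<^sub>E j\<in>{1..r}. proj j F). x ` {1..r} \<in> E)}"

definition order_complex_incl :: "'a set set \<Rightarrow> 'a set set set" where
  "order_complex_incl P = {c. c \<noteq> {} \<and> finite c \<and> c \<subseteq> P \<and>
      (\<forall>x\<in>c. \<forall>y\<in>c. x \<subseteq> y \<or> y \<subseteq> x)}"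

definition i_map :: "nat \<Rightarrow> (nat \<Rightarrow> 'v set) \<Rightarrow> (nat \<Rightarrow> 'v) set" where
  "i_map r \<phi> = (\<Pi>\<^sub>E j\<in>{1..r}. \<phi> j)"

text \<open>Isomorphism of simplicial complexes given by their sets of nonempty simplices:
  a bijection of vertex sets mapping simplices exactly onto simplices.\<close>
definition simp_iso :: "'a set set \<Rightarrow> 'b set set \<Rightarrow> bool" where
  "simp_iso K L \<longleftrightarrow> (\<exists>f. bij_betw f (\<Union>K) (\<Union>L) \<and>
      (\<forall>S. S \<subseteq> \<Union>K \<longrightarrow> (S \<in> K \<longleftrightarrow> f ` S \<in> L)))"

definition contains_K11_22 :: "nat \<Rightarrow> 'v set \<Rightarrow> 'v set set \<Rightarrow> bool" where
  "contains_K11_22 r V E \<longleftrightarrow> (\<exists>A :: nat \<Rightarrow> 'v set.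
      (\<forall>j\<in>{1..r}. A j \<subseteq> V) \<and>
      (\<forall>j\<in>{1..r}. \<forall>k\<in>{1..r}. j \<noteq> k \<longrightarrow> A j \<inter> A k = {}) \<and>
      (\<forall>j\<in>{1..r-2}. card (A j) = 1) \<and> card (A (r-1)) = 2 \<and> card (A r) = 2 \<and>
      (\<forall>x\<in>(\<Pi>\<^sub>E j\<in>{1..r}. A j). x ` {1..r} \<in> E))"

end

theory Submission
  imports Defs "HOL-Combinatorics.Transposition"
begin

text \<open>Every box i(\<phi>) is a simplex of B_edge(H), and a simplex F lies in i(P) exactly when
  it is the full product of its coordinate projections. A simplex that is not such a box has
  two coordinates with at least two values each; two such values in each, together with one
  value in every other coordinate, span a K_{1,...,1,2,2}. Conversely, a K_{1,...,1,2,2} yields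
  the non-box simplex consisting of two tuples differing in both large coordinates. Since both
  complexes are order complexes of finite inclusion posets with i(P) inside F(B_edge(H)),
  they are isomorphic exactly when the two posets coincide.\<close>

lemma proj_PiE:
  assumes "\<forall>j\<in>I. \<phi> j \<noteq> {}" and "j \<in> I"
  shows "proj j (Pi\<^sub>E I \<phi>) = \<phi> j"
proof
  show "proj j (Pi\<^sub>E I \<phi>) \<subseteq> \<phi> j"
    using assms by (auto simp: proj_def PiE_mem)
  show "\<phi> j \<subseteq> proj j (Pi\<^sub>E I \<phi>)"
  proof
    fix a assume a: "a \<in> \<phi> j"
    have "Pi\<^sub>E I \<phi> \<noteq> {}"
      using assms(1) by (simp add: PiE_eq_empty_iff)
    then obtain x where x: "x \<in> Pi\<^sub>E I \<phi>"
      by blast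
    have "x(j := a) \<in> Pi\<^sub>E I \<phi>"
      using x a assms(2) by (auto simp: PiE_iff extensional_def)
    then show "a \<in> proj j (Pi\<^sub>E I \<phi>)"
      unfolding proj_def by (auto intro!: image_eqI[where x = "x(j := a)"])
  qed
qed

lemma subset_PiE_proj:
  assumes "F \<subseteq> extensional I"
  shows "F \<subseteq> Pi\<^sub>E I (\<lambda>j. proj j F)"
  using assms by (auto simp: PiE_iff proj_def extensional_def)

lemma eq_PiE_proj_if_single_valued_except:
  assumes sub: "F \<subseteq> Pi\<^sub>E I (\<lambda>j. proj j F)" and "k \<in> I"
    and single_valued: "\<And>j u v. j \<in> I \<Longrightarrow> j \<noteq> k \<Longrightarrow> u \<in> proj j F \<Longrightarrow> v \<in> proj j F \<Longrightarrow> u = v"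
  shows "F = Pi\<^sub>E I (\<lambda>j. proj j F)"
proof
  show "Pi\<^sub>E I (\<lambda>j. proj j F) \<subseteq> F"
  proof
    fix z assume z: "z \<in> Pi\<^sub>E I (\<lambda>j. proj j F)"
    then have "z k \<in> proj k F"
      using \<open>k \<in> I\<close> by (rule PiE_mem)
    then obtain x where x: "x \<in> F" "x k = z k"
      by (auto simp: proj_def)
    have "x = z"
    proof (rule PiE_ext[OF _ z])
      show "x \<in> Pi\<^sub>E I (\<lambda>j. proj j F)" using x sub by blast
      then show "x i = z i" if "i \<in> I" for i
        using that z x single_valued[of i "x i" "z i"] by (cases "i = k") auto
    qed
    with x show "z \<in> F" by simp
  qed
qed (fact sub)

lemma two_spread_coordinates_if_not_PiE_proj:
  assumes "F \<subseteq> Pi\<^sub>E I (\<lambda>j. proj j F)" "F \<noteq> Pi\<^sub>E I (\<lambda>j. proj j F)" "I \<noteq> {}"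
  obtains j k u u' v v' where "j \<in> I" "k \<in> I" "j \<noteq> k"
    "u \<in> proj j F" "u' \<in> proj j F" "u \<noteq> u'" "v \<in> proj k F" "v' \<in> proj k F" "v \<noteq> v'"
proof (rule ccontr)
  note witness = that
  assume no: "\<not> thesis"
  define spread where "spread j \<longleftrightarrow> (\<exists>u u'. u \<in> proj j F \<and> u' \<in> proj j F \<and> u \<noteq> u')" for j
  have unique: "j = k" if "j \<in> I" "k \<in> I" "spread j" "spread k" for j k
    using no witness that unfolding spread_def by metis
  obtain k where "k \<in> I" "\<And>j. j \<in> I \<Longrightarrow> j \<noteq> k \<Longrightarrow> \<not> spread j"
    using unique \<open>I \<noteq> {}\<close> by blast
  then have "F = Pi\<^sub>E I (\<lambda>j. proj j F)"
    by (intro eq_PiE_proj_if_single_valued_except[OF assms(1)]) (auto simp: spread_def)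
  with assms(2) show False ..
qed

lemma bij_betw_self_moving_pair:
  assumes "a \<in> S" "b \<in> S" "a \<noteq> b" "c \<in> S" "d \<in> S" "c \<noteq> d"
  obtains \<sigma> where "bij_betw \<sigma> S S" "\<sigma> a = c" "\<sigma> b = d"
proof
  let ?\<sigma> = "transpose (transpose a c b) d \<circ> transpose a c"
  have "transpose a c b \<in> S"
    using assms by (auto simp: transpose_def)
  then show "bij_betw ?\<sigma> S S"
    using assms by (intro bij_betw_trans[where B = S]) simp_all
  show "?\<sigma> a = c" "?\<sigma> b = d"
    using assms by (auto simp: transpose_def)
qed

lemma transversals_reindex:
  assumes "bij_betw \<sigma> I I" and "\<forall>y\<in>Pi\<^sub>E I B. y ` I \<in> E"
  shows "\<forall>x\<in>Pi\<^sub>E I (\<lambda>i. B (\<sigma> i)). x ` I \<in> E"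
proof
  fix x assume x: "x \<in> Pi\<^sub>E I (\<lambda>i. B (\<sigma> i))"
  define \<tau> where "\<tau> = inv_into I \<sigma>"
  have \<tau>: "bij_betw \<tau> I I" "\<And>m. m \<in> I \<Longrightarrow> \<sigma> (\<tau> m) = m"
    using assms(1) by (auto simp: \<tau>_def bij_betw_inv_into bij_betw_inv_into_right)
  define y where "y = restrict (x \<circ> \<tau>) I"
  have "y \<in> Pi\<^sub>E I B"
    using x \<tau> by (auto simp: y_def bij_betw_apply) (metis PiE_mem bij_betw_apply)
  moreover have "y ` I = x ` I"
    using \<tau>(1) by (simp add: y_def image_image[of x \<tau>, symmetric] bij_betw_imp_surj_on)
  ultimately show "x ` I \<in> E" using assms(2) by metis
qed

lemma i_map_mem_B_edge:
  assumes "finite V" and "\<phi> \<in> P_K_H r V E"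
  shows "i_map r \<phi> \<in> B_edge r V E"
proof -
  let ?F = "Pi\<^sub>E {1..r} \<phi>"
  have ne: "\<forall>j\<in>{1..r}. \<phi> j \<noteq> {}" and sub: "\<forall>j\<in>{1..r}. \<phi> j \<subseteq> V"
    and edge: "\<forall>x\<in>?F. inj_on x {1..r} \<and> x ` {1..r} \<in> E"
    using assms(2) by (auto simp: P_K_H_def PiE_iff)
  have pr: "proj j ?F = \<phi> j" if "j \<in> {1..r}" for j
    using proj_PiE[OF ne that] .
  have "?F \<noteq> {}"
    using ne by (simp add: PiE_eq_empty_iff)
  moreover have "finite ?F"
    using sub assms(1) by (intro finite_PiE) (blast intro: finite_subset)+
  moreover have "?F \<subseteq> B_edge_vertices r V E"
    using edge sub by (auto simp: B_edge_vertices_def PiE_iff)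
  moreover have "proj j ?F \<inter> proj k ?F = {}" if jk: "j \<in> {1..r}" "k \<in> {1..r}" "j \<noteq> k" for j k
  proof (rule ccontr)
    assume "proj j ?F \<inter> proj k ?F \<noteq> {}"
    then obtain a where a: "a \<in> \<phi> j" "a \<in> \<phi> k"
      using pr jk by auto
    obtain x where "x \<in> ?F"
      using \<open>?F \<noteq> {}\<close> by blast
    then have "x(j := a, k := a) \<in> ?F"
      using a jk by (auto simp: PiE_iff extensional_def)
    \<comment> \<open>a transversal repeating the vertex a cannot be injective\<close>
    then have "inj_on (x(j := a, k := a)) {1..r}"
      using edge by blast
    then have "j = k"
      by (rule inj_onD) (use jk in simp_all)
    with jk(3) show False ..
  qed
  moreover have "(\<Pi>\<^sub>E j\<in>{1..r}. proj j ?F) = ?F"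
    using pr by (rule PiE_cong)
  then have "\<forall>x\<in>(\<Pi>\<^sub>E j\<in>{1..r}. proj j ?F). x ` {1..r} \<in> E"
    using edge by simp
  ultimately show ?thesis
    by (simp add: B_edge_def i_map_def)
qed

lemma PiE_proj_mem_i_map:
  assumes "F \<in> B_edge r V E"
  shows "Pi\<^sub>E {1..r} (\<lambda>j. proj j F) \<in> i_map r ` P_K_H r V E"
proof -
  let ?\<phi> = "restrict (\<lambda>j. proj j F) {1..r}"
  have F: "F \<noteq> {}" "F \<subseteq> B_edge_vertices r V E"
    "\<forall>j\<in>{1..r}. \<forall>k\<in>{1..r}. j \<noteq> k \<longrightarrow> proj j F \<inter> proj k F = {}"
    "\<forall>x\<in>(\<Pi>\<^sub>E j\<in>{1..r}. proj j F). x ` {1..r} \<in> E"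
    using assms by (auto simp: B_edge_def)
  have eq: "Pi\<^sub>E {1..r} ?\<phi> = Pi\<^sub>E {1..r} (\<lambda>j. proj j F)"
    by (rule PiE_cong) simp
  have "inj_on x {1..r}" if x: "x \<in> Pi\<^sub>E {1..r} (\<lambda>j. proj j F)" for x
  proof (rule inj_onI, rule ccontr)
    fix j k assume jk: "j \<in> {1..r}" "k \<in> {1..r}" "x j = x k" "j \<noteq> k"
    then have "x j \<in> proj j F \<inter> proj k F"
      using x by (metis IntI PiE_mem)
    with F(3) jk show False by blast
  qed
  moreover have "?\<phi> \<in> (\<Pi>\<^sub>E j\<in>{1..r}. Pow V - {{}})"
    using F(1,2) by (auto simp: proj_def B_edge_vertices_def PiE_iff)
  ultimately have "?\<phi> \<in> P_K_H r V E"
    using F(4) eq by (simp add: P_K_H_def)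
  then show ?thesis
    using eq by (metis i_map_def image_eqI)
qed

lemma PiE_proj_eq_if_mem_i_map:
  assumes "F \<in> i_map r ` P_K_H r V E"
  shows "F = Pi\<^sub>E {1..r} (\<lambda>j. proj j F)"
proof -
  obtain \<phi> where \<phi>: "\<phi> \<in> P_K_H r V E" and F: "F = Pi\<^sub>E {1..r} \<phi>"
    using assms by (auto simp: i_map_def)
  have ne: "\<forall>j\<in>{1..r}. \<phi> j \<noteq> {}"
    using \<phi> by (auto simp: P_K_H_def PiE_iff)
  show ?thesis
    unfolding F by (rule PiE_cong, rule proj_PiE[OF ne, symmetric])
qed

lemma i_map_P_K_H_eq:
  assumes "finite V"
  shows "i_map r ` P_K_H r V E = {F \<in> B_edge r V E. F = Pi\<^sub>E {1..r} (\<lambda>j. proj j F)}"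
proof
  show "i_map r ` P_K_H r V E \<subseteq> {F \<in> B_edge r V E. F = Pi\<^sub>E {1..r} (\<lambda>j. proj j F)}"
    using i_map_mem_B_edge[OF assms] PiE_proj_eq_if_mem_i_map by blast
  show "{F \<in> B_edge r V E. F = Pi\<^sub>E {1..r} (\<lambda>j. proj j F)} \<subseteq> i_map r ` P_K_H r V E"
    using PiE_proj_mem_i_map by fastforce
qed

lemma contains_K11_22I:
  assumes "r \<ge> 2" and jk: "j \<in> {1..r}" "k \<in> {1..r}" "j \<noteq> k"
    and BV: "\<forall>m\<in>{1..r}. B m \<subseteq> V"
    and Bdisj: "\<forall>m\<in>{1..r}. \<forall>m'\<in>{1..r}. m \<noteq> m' \<longrightarrow> B m \<inter> B m' = {}"
    and Bj: "card (B j) = 2" and Bk: "card (B k) = 2"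
    and Bsingle: "\<forall>m\<in>{1..r} - {j, k}. card (B m) = 1"
    and BE: "\<forall>x\<in>Pi\<^sub>E {1..r} B. x ` {1..r} \<in> E"
  shows "contains_K11_22 r V E"
proof -
  have last_two: "r - 1 \<in> {1..r}" "r \<in> {1..r}" "r - 1 \<noteq> r"
    using assms(1) by auto
  obtain \<sigma> where \<sigma>: "bij_betw \<sigma> {1..r} {1..r}" "\<sigma> (r - 1) = j" "\<sigma> r = k"
    using bij_betw_self_moving_pair[OF last_two jk] .
  have \<sigma>_in: "\<sigma> i \<in> {1..r}" if "i \<in> {1..r}" for i
    using \<sigma>(1) that by (rule bij_betw_apply)
  have \<sigma>_eq: "\<sigma> i = \<sigma> i' \<longleftrightarrow> i = i'" if "i \<in> {1..r}" "i' \<in> {1..r}" for i i'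
    using \<sigma>(1) that by (auto simp: bij_betw_def dest: inj_onD)
  show ?thesis
    unfolding contains_K11_22_def
  proof (intro exI[of _ "\<lambda>i. B (\<sigma> i)"] conjI ballI impI)
    show "B (\<sigma> i) \<subseteq> V" if "i \<in> {1..r}" for i
      using BV \<sigma>_in that by blast
    show "B (\<sigma> i) \<inter> B (\<sigma> i') = {}" if "i \<in> {1..r}" "i' \<in> {1..r}" "i \<noteq> i'" for i i'
      using Bdisj \<sigma>_in \<sigma>_eq that by blast
    show "card (B (\<sigma> i)) = 1" if "i \<in> {1..r - 2}" for i
    proof -
      have "i \<in> {1..r}" "i \<noteq> r - 1" "i \<noteq> r"
        using that by auto
      then have "\<sigma> i \<in> {1..r} - {j, k}"
        using \<sigma> \<sigma>_in \<sigma>_eq last_two by auto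
      then show ?thesis
        using Bsingle by blast
    qed
    show "card (B (\<sigma> (r - 1))) = 2" "card (B (\<sigma> r)) = 2"
      using Bj Bk \<sigma> by simp_all
    show "x ` {1..r} \<in> E" if "x \<in> Pi\<^sub>E {1..r} (\<lambda>i. B (\<sigma> i))" for x
      using transversals_reindex[OF \<sigma>(1) BE] that by blast
  qed
qed

lemma contains_K11_22_if_non_box_simplex:
  assumes "r \<ge> 2" and "F \<in> B_edge r V E" and "F \<noteq> Pi\<^sub>E {1..r} (\<lambda>j. proj j F)"
  shows "contains_K11_22 r V E"
proof -
  have F: "F \<noteq> {}" "F \<subseteq> B_edge_vertices r V E"
    "\<forall>j\<in>{1..r}. \<forall>k\<in>{1..r}. j \<noteq> k \<longrightarrow> proj j F \<inter> proj k F = {}"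
    "\<forall>x\<in>(\<Pi>\<^sub>E j\<in>{1..r}. proj j F). x ` {1..r} \<in> E"
    using assms(2) by (auto simp: B_edge_def)
  have "F \<subseteq> Pi\<^sub>E {1..r} (\<lambda>j. proj j F)"
    using F(2) by (intro subset_PiE_proj) (auto simp: B_edge_vertices_def PiE_iff)
  moreover have "{1..r} \<noteq> {}"
    using assms(1) by simp
  ultimately obtain j k u u' v v' where jk: "j \<in> {1..r}" "k \<in> {1..r}" "j \<noteq> k"
    and u: "u \<in> proj j F" "u' \<in> proj j F" "u \<noteq> u'"
    and v: "v \<in> proj k F" "v' \<in> proj k F" "v \<noteq> v'"
    using two_spread_coordinates_if_not_PiE_proj assms(3) by metis
  define B where
    "B m = (if m = j then {u, u'} else if m = k then {v, v'} else {SOME a. a \<in> proj m F})" for m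
  have B_proj: "B m \<subseteq> proj m F" for m
    using u v F(1) unfolding B_def proj_def by (auto intro: someI)
  show ?thesis
  proof (rule contains_K11_22I[OF assms(1) jk, of B])
    have "proj m F \<subseteq> V" if "m \<in> {1..r}" for m
      using F(2) that by (auto simp: proj_def B_edge_vertices_def PiE_iff)
    then show "\<forall>m\<in>{1..r}. B m \<subseteq> V"
      using B_proj by blast
    show "\<forall>m\<in>{1..r}. \<forall>m'\<in>{1..r}. m \<noteq> m' \<longrightarrow> B m \<inter> B m' = {}"
      using F(3) B_proj by blast
    show "card (B j) = 2" "card (B k) = 2" "\<forall>m\<in>{1..r} - {j, k}. card (B m) = 1"
      using u v jk by (simp_all add: B_def)
    show "\<forall>x\<in>Pi\<^sub>E {1..r} B. x ` {1..r} \<in> E"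
      using F(4) PiE_mono[of "{1..r}" B "\<lambda>m. proj m F"] B_proj by blast
  qed
qed

lemma B_edge_if_subset_complete_family:
  assumes "\<forall>j\<in>{1..r}. A j \<subseteq> V"
    and "\<forall>j\<in>{1..r}. \<forall>k\<in>{1..r}. j \<noteq> k \<longrightarrow> A j \<inter> A k = {}"
    and "\<forall>x\<in>Pi\<^sub>E {1..r} A. x ` {1..r} \<in> E"
    and "F \<noteq> {}" "finite F" "F \<subseteq> Pi\<^sub>E {1..r} A"
  shows "F \<in> B_edge r V E"
proof -
  have proj_A: "proj j F \<subseteq> A j" if "j \<in> {1..r}" for j
    using assms(6) that by (auto simp: proj_def PiE_iff)
  have "Pi\<^sub>E {1..r} A \<subseteq> Pi\<^sub>E {1..r} (\<lambda>_. V)"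
    by (rule PiE_mono) (use assms(1) in blast)
  then have "F \<subseteq> B_edge_vertices r V E"
    using assms(3,6) by (auto simp: B_edge_vertices_def)
  moreover have "\<forall>j\<in>{1..r}. \<forall>k\<in>{1..r}. j \<noteq> k \<longrightarrow> proj j F \<inter> proj k F = {}"
    using assms(2) proj_A by blast
  moreover have "Pi\<^sub>E {1..r} (\<lambda>j. proj j F) \<subseteq> Pi\<^sub>E {1..r} A"
    using proj_A by (rule PiE_mono)
  then have "\<forall>x\<in>Pi\<^sub>E {1..r} (\<lambda>j. proj j F). x ` {1..r} \<in> E"
    using assms(3) by blast
  ultimately show ?thesis
    using assms(4,5) by (simp add: B_edge_def)
qed

lemma non_box_simplex_if_contains_K11_22:
  assumes "r \<ge> 2" and "contains_K11_22 r V E"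
  obtains F where "F \<in> B_edge r V E" and "F \<noteq> Pi\<^sub>E {1..r} (\<lambda>j. proj j F)"
proof -
  obtain A :: "nat \<Rightarrow> _" where AV: "\<forall>j\<in>{1..r}. A j \<subseteq> V"
    and Adisj: "\<forall>j\<in>{1..r}. \<forall>k\<in>{1..r}. j \<noteq> k \<longrightarrow> A j \<inter> A k = {}"
    and Asingle: "\<forall>j\<in>{1..r - 2}. card (A j) = 1"
    and Apair: "card (A (r - 1)) = 2" "card (A r) = 2"
    and AE: "\<forall>x\<in>(\<Pi>\<^sub>E j\<in>{1..r}. A j). x ` {1..r} \<in> E"
    using assms(2) unfolding contains_K11_22_def by blast
  obtain a a' where a: "A (r - 1) = {a, a'}" "a \<noteq> a'"
    using Apair(1) by (meson card_2_iff)
  obtain b b' where b: "A r = {b, b'}" "b \<noteq> b'"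
    using Apair(2) by (meson card_2_iff)
  have last_two: "r - 1 \<in> {1..r}" "r \<in> {1..r}" "r - 1 \<noteq> r"
    using assms(1) by auto
  have "A m \<noteq> {}" if "m \<in> {1..r}" for m
  proof (cases "m \<le> r - 2")
    case True
    then have "card (A m) = 1"
      using that Asingle by auto
    then show ?thesis by auto
  next
    case False
    then have "m = r - 1 \<or> m = r"
      using that by auto
    then show ?thesis
      using a b by auto
  qed
  then obtain x0 where x0: "x0 \<in> Pi\<^sub>E {1..r} A"
    by (metis PiE_eq_empty_iff ex_in_conv)
  define x where "x = x0(r - 1 := a, r := b)"
  define y where "y = x0(r - 1 := a', r := b')"
  have xy: "x \<in> Pi\<^sub>E {1..r} A" "y \<in> Pi\<^sub>E {1..r} A"
    using x0 a b last_two by (auto simp: x_def y_def PiE_iff extensional_def)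
  show ?thesis
  proof
    show "{x, y} \<in> B_edge r V E"
      using xy by (intro B_edge_if_subset_complete_family[OF AV Adisj AE]) auto
    \<comment> \<open>mixing the last coordinate of y into x gives a tuple of the box outside {x, y}\<close>
    have "x(r := b') \<in> Pi\<^sub>E {1..r} (\<lambda>j. proj j {x, y})"
      using xy last_two by (auto simp: PiE_iff proj_def extensional_def x_def y_def)
    moreover have "x(r := b') \<notin> {x, y}"
      using a b last_two by (auto simp: x_def y_def fun_eq_iff)
    ultimately show "{x, y} \<noteq> Pi\<^sub>E {1..r} (\<lambda>j. proj j {x, y})"
      by blast
  qed
qed

lemma i_map_P_K_H_eq_B_edge_iff:
  assumes "r \<ge> 2" and "finite V"
  shows "i_map r ` P_K_H r V E = B_edge r V E \<longleftrightarrow> \<not> contains_K11_22 r V E"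
proof
  assume "i_map r ` P_K_H r V E = B_edge r V E"
  then have "F = Pi\<^sub>E {1..r} (\<lambda>j. proj j F)" if "F \<in> B_edge r V E" for F
    using that by (metis PiE_proj_eq_if_mem_i_map)
  then show "\<not> contains_K11_22 r V E"
    using non_box_simplex_if_contains_K11_22[OF assms(1)] by metis
next
  assume "\<not> contains_K11_22 r V E"
  then have "F = Pi\<^sub>E {1..r} (\<lambda>j. proj j F)" if "F \<in> B_edge r V E" for F
    using contains_K11_22_if_non_box_simplex[OF assms(1) that] by blast
  then show "i_map r ` P_K_H r V E = B_edge r V E"
    unfolding i_map_P_K_H_eq[OF assms(2)] by blast
qed

lemma Union_order_complex_incl: "\<Union>(order_complex_incl P) = P"
proof
  show "\<Union>(order_complex_incl P) \<subseteq> P"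
    unfolding order_complex_incl_def by blast
  show "P \<subseteq> \<Union>(order_complex_incl P)"
  proof
    fix p assume "p \<in> P"
    then have "{p} \<in> order_complex_incl P"
      unfolding order_complex_incl_def by simp
    then show "p \<in> \<Union>(order_complex_incl P)" by blast
  qed
qed

lemma simp_iso_order_complex_incl_subset_iff:
  assumes "finite Q" and "P \<subseteq> Q"
  shows "simp_iso (order_complex_incl P) (order_complex_incl Q) \<longleftrightarrow> P = Q"
proof
  assume "simp_iso (order_complex_incl P) (order_complex_incl Q)"
  then obtain f where "bij_betw f P Q"
    unfolding simp_iso_def Union_order_complex_incl by blast
  then have "card P = card Q"
    by (rule bij_betw_same_card)
  with assms show "P = Q"
    by (metis card_subset_eq)
qed (auto simp: simp_iso_def intro: exI[of _ id])

lemma finite_B_edge: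
  assumes "finite V"
  shows "finite (B_edge r V E)"
proof (rule finite_subset)
  show "B_edge r V E \<subseteq> Pow (Pi\<^sub>E {1..r} (\<lambda>_. V))"
    by (auto simp: B_edge_def B_edge_vertices_def)
  show "finite (Pow (Pi\<^sub>E {1..r} (\<lambda>_. V)))"
    using assms by (simp add: finite_PiE)
qed

theorem mainTheorem3:
  fixes r :: nat and V :: "'v set" and E :: "'v set set"
  assumes "r \<ge> 2" and "r_graph r V E"
  shows "simp_iso (order_complex_incl (i_map r ` P_K_H r V E))
                  (order_complex_incl (B_edge r V E))
         \<longleftrightarrow> \<not> contains_K11_22 r V E"
proof -
  have "finite V"
    using assms(2) by (simp add: r_graph_def)
  moreover from this have "i_map r ` P_K_H r V E \<subseteq> B_edge r V E"
    by (auto simp: i_map_P_K_H_eq)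
  ultimately show ?thesis
    by (simp add: simp_iso_order_complex_incl_subset_iff finite_B_edge
        i_map_P_K_H_eq_B_edge_iff assms(1))
qed

end
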